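(* Let $G$ be a two-player game with a finite set $\mathcal{P}$ of positions as in the context, let $\alpha$ be as defined there, and let $x$ be a Richman function for $G$. Let $T$ be the set defined from $x$ as in the context. Then $\alpha(P)=x(P)$ for all $P\in\mathcal{P}$ if and only if every position $P$ with $x(P)>0$ belongs to $T$.
   Context: The game is given by a finite set $\mathcal{P}$ of positions; each non-terminal position $P$ has a nonempty set of White options $P_w$ and a nonempty set of Black options $P_b$ (positions to which White, resp. Black, can move). Terminal positions are designated as White wins or Black wins. Define $\alpha_n:\mathcal{P}\to[0,1]$ by $\alpha_n(P)=1$ (resp. $0$) for all $n$ if $P$ is a terminal White (resp. Black) win, $\alpha_0(P)=0$ for non-terminal $P$, and $\alpha_{n+1}(P)=\frac12(\max_w\alpha_n(P_w)+\min_b\alpha_n(P_b))$ for non-terminal $P$; let $\alpha(P)=\lim_n\alpha_n(P)$ (the sequence is nondecreasing). A Richman function is a function $x:\mathcal{P}\to[0,1]$ with $x(P)=1$ at terminal White wins, $x(P)=0$ at terminal Black wins, and $x(P)=\frac12(\max_w x(P_w)+\min_b x(P_b))$ at every non-terminal $P$. A White move from $P$ to $P_w$ is $x$-greedy if $x(P_w)=\max_{w'}x(P_{w'})$. Let $T_0$ be the set of terminal positions, and for $n\ge0$ let $T_{n+1}$ consist of the positions that belong to $T_n$, or have an $x$-greedy White option in $T_n$, or have all of their Black options in $T_n$. Let $T=\bigcup_n T_n$. *)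

theory Defs
  imports Complex_Main
begin

text \<open>A game on a finite type of positions 'p is given by the set Term of terminal
positions, the set WWin of terminal White wins (terminal positions not in WWin are
Black wins), and the White/Black option maps Wo, Bo.\<close>

definition game :: "'p set \<Rightarrow> 'p set \<Rightarrow> ('p \<Rightarrow> 'p set) \<Rightarrow> ('p \<Rightarrow> 'p set) \<Rightarrow> bool" where
  "game Term WWin Wo Bo \<longleftrightarrow> WWin \<subseteq> Term \<and>
     (\<forall>P. P \<notin> Term \<longrightarrow> Wo P \<noteq> {} \<and> Bo P \<noteq> {})"

fun alpha_seq :: "'p set \<Rightarrow> 'p set \<Rightarrow> ('p \<Rightarrow> 'p set) \<Rightarrow> ('p \<Rightarrow> 'p set) \<Rightarrow> nat \<Rightarrow> 'p \<Rightarrow> real" where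
  "alpha_seq Term WWin Wo Bo 0 P =
     (if P \<in> Term then (if P \<in> WWin then 1 else 0) else 0)"
| "alpha_seq Term WWin Wo Bo (Suc n) P =
     (if P \<in> Term then (if P \<in> WWin then 1 else 0)
      else (Max (alpha_seq Term WWin Wo Bo n ` Wo P) + Min (alpha_seq Term WWin Wo Bo n ` Bo P)) / 2)"

definition alpha :: "'p set \<Rightarrow> 'p set \<Rightarrow> ('p \<Rightarrow> 'p set) \<Rightarrow> ('p \<Rightarrow> 'p set) \<Rightarrow> 'p \<Rightarrow> real" where
  "alpha Term WWin Wo Bo P = lim (\<lambda>n. alpha_seq Term WWin Wo Bo n P)"

definition richman :: "'p set \<Rightarrow> 'p set \<Rightarrow> ('p \<Rightarrow> 'p set) \<Rightarrow> ('p \<Rightarrow> 'p set) \<Rightarrow> ('p \<Rightarrow> real) \<Rightarrow> bool" where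
  "richman Term WWin Wo Bo x \<longleftrightarrow>
     (\<forall>P. 0 \<le> x P \<and> x P \<le> 1) \<and>
     (\<forall>P\<in>Term. x P = (if P \<in> WWin then 1 else 0)) \<and>
     (\<forall>P. P \<notin> Term \<longrightarrow> x P = (Max (x ` Wo P) + Min (x ` Bo P)) / 2)"

definition greedy_white :: "('p \<Rightarrow> 'p set) \<Rightarrow> ('p \<Rightarrow> real) \<Rightarrow> 'p \<Rightarrow> 'p \<Rightarrow> bool" where
  "greedy_white Wo x P Q \<longleftrightarrow> Q \<in> Wo P \<and> x Q = Max (x ` Wo P)"

fun Tseq :: "'p set \<Rightarrow> ('p \<Rightarrow> 'p set) \<Rightarrow> ('p \<Rightarrow> 'p set) \<Rightarrow> ('p \<Rightarrow> real) \<Rightarrow> nat \<Rightarrow> 'p set" where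
  "Tseq Term Wo Bo x 0 = Term"
| "Tseq Term Wo Bo x (Suc n) = Tseq Term Wo Bo x n \<union>
     {P. (\<exists>Q. greedy_white Wo x P Q \<and> Q \<in> Tseq Term Wo Bo x n) \<or> Bo P \<subseteq> Tseq Term Wo Bo x n}"

definition Tset :: "'p set \<Rightarrow> ('p \<Rightarrow> 'p set) \<Rightarrow> ('p \<Rightarrow> 'p set) \<Rightarrow> ('p \<Rightarrow> real) \<Rightarrow> 'p set" where
  "Tset Term Wo Bo x = (\<Union>n. Tseq Term Wo Bo x n)"

end

theory Submission
  imports Defs
begin

text \<open>The value sequence \<open>\<alpha>\<^sub>n\<close> is monotone and lies below every supersolution of the
Richman equations (in particular below the constant 1 and below every Richman function), so
its limit \<open>\<alpha>\<close> exists and is the least Richman function.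

If every position where \<open>x\<close> is positive lies in \<open>T\<close>, take a position maximising the defect
\<open>x - \<alpha>\<close>; the defect there is at most the average of the defects at an \<open>x\<close>-greedy White option
and an \<open>\<alpha>\<close>-optimal Black option, so both also maximise it.  Induction along \<open>T\<^sub>0 \<subseteq> T\<^sub>1 \<subseteq> \<dots>\<close>
shows that no position of \<open>T\<close> maximises a positive defect; but such a maximiser has \<open>x > 0\<close>,
so the defect vanishes.

Conversely, if some position with \<open>x > 0\<close> lies outside \<open>T\<close>, let \<open>S\<close> be the set of positions
outside \<open>T\<close> on which \<open>x\<close> attains its maximum over the complement of \<open>T\<close>.  From each position of
\<open>S\<close> all \<open>x\<close>-greedy White moves and some \<open>x\<close>-optimal Black move stay in \<open>S\<close>, so lowering \<open>x\<close>
by a small constant on \<open>S\<close> yields a supersolution; hence \<open>\<alpha> < x\<close> on \<open>S\<close>.\<close>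

lemma Max_image_mono:
  fixes f g :: "'a \<Rightarrow> 'b::linorder"
  assumes "finite A" "A \<noteq> {}" "\<And>a. a \<in> A \<Longrightarrow> f a \<le> g a"
  shows "Max (f ` A) \<le> Max (g ` A)"
  using assms by (auto simp: Max_le_iff intro: order_trans[OF _ Max_ge])

lemma Min_image_mono:
  fixes f g :: "'a \<Rightarrow> 'b::linorder"
  assumes "finite A" "A \<noteq> {}" "\<And>a. a \<in> A \<Longrightarrow> f a \<le> g a"
  shows "Min (f ` A) \<le> Min (g ` A)"
  using assms by (auto simp: Min_ge_iff intro: order_trans[OF Min_le])

lemma tendsto_Max_image:
  fixes f :: "nat \<Rightarrow> 'a \<Rightarrow> real"
  assumes "finite A" "A \<noteq> {}" "\<And>a. a \<in> A \<Longrightarrow> (\<lambda>n. f n a) \<longlonglongrightarrow> g a"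
  shows "(\<lambda>n. Max (f n ` A)) \<longlonglongrightarrow> Max (g ` A)"
  using assms by (induction A rule: finite_ne_induct) (auto intro!: tendsto_max)

lemma tendsto_Min_image:
  fixes f :: "nat \<Rightarrow> 'a \<Rightarrow> real"
  assumes "finite A" "A \<noteq> {}" "\<And>a. a \<in> A \<Longrightarrow> (\<lambda>n. f n a) \<longlonglongrightarrow> g a"
  shows "(\<lambda>n. Min (f n ` A)) \<longlonglongrightarrow> Min (g ` A)"
  using assms by (induction A rule: finite_ne_induct) (auto intro!: tendsto_min)

definition richman_super :: "'p set \<Rightarrow> 'p set \<Rightarrow> ('p \<Rightarrow> 'p set) \<Rightarrow> ('p \<Rightarrow> 'p set) \<Rightarrow> ('p \<Rightarrow> real) \<Rightarrow> bool" where
  "richman_super Term WWin Wo Bo y \<longleftrightarrow>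
     (\<forall>P\<in>Term. (if P \<in> WWin then 1 else 0) \<le> y P) \<and>
     (\<forall>P. P \<notin> Term \<longrightarrow> 0 \<le> y P \<and> (Max (y ` Wo P) + Min (y ` Bo P)) / 2 \<le> y P)"

lemma richman_imp_richman_super:
  "richman Term WWin Wo Bo x \<Longrightarrow> richman_super Term WWin Wo Bo x"
  by (simp add: richman_def richman_super_def)

lemma richman_super_const_one:
  assumes "game Term WWin Wo Bo"
  shows "richman_super Term WWin Wo Bo (\<lambda>_. 1)"
  using assms by (auto simp: richman_super_def game_def image_constant_conv)

lemma game_options_nonempty:
  "game Term WWin Wo Bo \<Longrightarrow> P \<notin> Term \<Longrightarrow> Wo P \<noteq> {} \<and> Bo P \<noteq> {}"
  by (simp add: game_def)

lemma alpha_seq_le_richman_super: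
  fixes Term WWin :: "'p::finite set"
  assumes G: "game Term WWin Wo Bo" and y: "richman_super Term WWin Wo Bo y"
  shows "alpha_seq Term WWin Wo Bo n P \<le> y P"
proof (induction n arbitrary: P)
  case 0
  then show ?case using y by (auto simp: richman_super_def)
next
  case (Suc n)
  show ?case
  proof (cases "P \<in> Term")
    case True
    then show ?thesis using y by (simp add: richman_super_def)
  next
    case False
    note ne = game_options_nonempty[OF G False]
    have "Max (alpha_seq Term WWin Wo Bo n ` Wo P) \<le> Max (y ` Wo P)"
      by (rule Max_image_mono) (use ne Suc in auto)
    moreover have "Min (alpha_seq Term WWin Wo Bo n ` Bo P) \<le> Min (y ` Bo P)"
      by (rule Min_image_mono) (use ne Suc in auto)
    moreover have "(Max (y ` Wo P) + Min (y ` Bo P)) / 2 \<le> y P"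
      using False y by (simp add: richman_super_def)
    ultimately show ?thesis using False by simp
  qed
qed

lemma alpha_seq_nonneg:
  fixes Term WWin :: "'p::finite set"
  assumes G: "game Term WWin Wo Bo"
  shows "0 \<le> alpha_seq Term WWin Wo Bo n P"
proof (induction n arbitrary: P)
  case (Suc n)
  show ?case
  proof (cases "P \<in> Term")
    case False
    note ne = game_options_nonempty[OF G False]
    then obtain w where "w \<in> Wo P" by blast
    then have "0 \<le> Max (alpha_seq Term WWin Wo Bo n ` Wo P)"
      using Suc.IH[of w] by (meson Max_ge finite finite_imageI imageI order_trans)
    moreover have "0 \<le> Min (alpha_seq Term WWin Wo Bo n ` Bo P)"
      using ne Suc by (auto simp: Min_ge_iff)
    ultimately show ?thesis by simp
  qed simp
qed simp

lemma incseq_alpha_seq: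
  fixes Term WWin :: "'p::finite set"
  assumes G: "game Term WWin Wo Bo"
  shows "incseq (\<lambda>n. alpha_seq Term WWin Wo Bo n P)"
proof (rule incseq_SucI)
  show "alpha_seq Term WWin Wo Bo n P \<le> alpha_seq Term WWin Wo Bo (Suc n) P" for n
  proof (induction n arbitrary: P)
    case 0
    show ?case
    proof (cases "P \<in> Term")
      case False
      then show ?thesis using alpha_seq_nonneg[OF G, of "Suc 0" P] by (simp del: alpha_seq.simps(2))
    qed simp
  next
    case (Suc n)
    show ?case
    proof (cases "P \<in> Term")
      case False
      note ne = game_options_nonempty[OF G False]
      have "Max (alpha_seq Term WWin Wo Bo n ` Wo P) \<le> Max (alpha_seq Term WWin Wo Bo (Suc n) ` Wo P)"
        by (rule Max_image_mono) (use ne Suc in auto)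
      moreover have "Min (alpha_seq Term WWin Wo Bo n ` Bo P) \<le> Min (alpha_seq Term WWin Wo Bo (Suc n) ` Bo P)"
        by (rule Min_image_mono) (use ne Suc in auto)
      ultimately show ?thesis using False by (simp only: alpha_seq.simps if_False) simp
    qed simp
  qed
qed

lemma alpha_seq_tendsto_alpha:
  fixes Term WWin :: "'p::finite set"
  assumes G: "game Term WWin Wo Bo"
  shows "(\<lambda>n. alpha_seq Term WWin Wo Bo n P) \<longlonglongrightarrow> alpha Term WWin Wo Bo P"
proof -
  have "\<forall>n. alpha_seq Term WWin Wo Bo n P \<le> 1"
    using alpha_seq_le_richman_super[OF G richman_super_const_one[OF G]] by blast
  then obtain L where "(\<lambda>n. alpha_seq Term WWin Wo Bo n P) \<longlonglongrightarrow> L"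
    using incseq_convergent[OF incseq_alpha_seq[OF G]] by blast
  then show ?thesis by (simp add: alpha_def limI)
qed

lemma alpha_le_richman_super:
  fixes Term WWin :: "'p::finite set"
  assumes "game Term WWin Wo Bo" "richman_super Term WWin Wo Bo y"
  shows "alpha Term WWin Wo Bo P \<le> y P"
  using alpha_seq_tendsto_alpha[OF assms(1)] alpha_seq_le_richman_super[OF assms]
  by (meson LIMSEQ_le_const2)

lemma alpha_le_richman:
  fixes Term WWin :: "'p::finite set"
  assumes "game Term WWin Wo Bo" "richman Term WWin Wo Bo x"
  shows "alpha Term WWin Wo Bo P \<le> x P"
  using alpha_le_richman_super richman_imp_richman_super assms by blast

lemma richman_alpha:
  fixes Term WWin :: "'p::finite set"
  assumes G: "game Term WWin Wo Bo"
  shows "richman Term WWin Wo Bo (alpha Term WWin Wo Bo)"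
proof -
  let ?a = "alpha Term WWin Wo Bo" and ?s = "\<lambda>n. alpha_seq Term WWin Wo Bo n"
  have lim: "(\<lambda>n. ?s n P) \<longlonglongrightarrow> ?a P" for P
    by (rule alpha_seq_tendsto_alpha[OF G])
  have "0 \<le> ?a P" for P
    using lim alpha_seq_nonneg[OF G] by (meson LIMSEQ_le_const)
  moreover have "?a P \<le> 1" for P
    by (rule alpha_le_richman_super[OF G richman_super_const_one[OF G]])
  moreover have "?a P = (if P \<in> WWin then 1 else 0)" if "P \<in> Term" for P
  proof -
    have "?s n P = (if P \<in> WWin then 1 else 0)" for n
      using that by (cases n) auto
    then show ?thesis using lim[of P] by (simp add: LIMSEQ_const_iff)
  qed
  moreover have "?a P = (Max (?a ` Wo P) + Min (?a ` Bo P)) / 2" if P: "P \<notin> Term" for P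
  proof -
    note ne = game_options_nonempty[OF G P]
    have "(\<lambda>n. Max (?s n ` Wo P)) \<longlonglongrightarrow> Max (?a ` Wo P)"
      by (rule tendsto_Max_image) (use ne lim in auto)
    moreover have "(\<lambda>n. Min (?s n ` Bo P)) \<longlonglongrightarrow> Min (?a ` Bo P)"
      by (rule tendsto_Min_image) (use ne lim in auto)
    ultimately have "(\<lambda>n. ?s (Suc n) P) \<longlonglongrightarrow> (Max (?a ` Wo P) + Min (?a ` Bo P)) / 2"
      using P by (simp add: tendsto_add tendsto_divide)
    then show ?thesis using LIMSEQ_Suc[OF lim[of P]] LIMSEQ_unique by blast
  qed
  ultimately show ?thesis by (simp add: richman_def)
qed

lemma Tseq_mono: "m \<le> n \<Longrightarrow> Tseq Term Wo Bo x m \<subseteq> Tseq Term Wo Bo x n"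
  by (rule lift_Suc_mono_le[of "Tseq Term Wo Bo x"]) auto

lemma Term_subset_Tset: "Term \<subseteq> Tset Term Wo Bo x"
proof
  fix P assume "P \<in> Term"
  then have "P \<in> Tseq Term Wo Bo x 0" by simp
  then show "P \<in> Tset Term Wo Bo x" unfolding Tset_def by (rule UN_I[OF UNIV_I])
qed

lemma Tset_if_greedy_white_in_Tset:
  assumes "greedy_white Wo x P Q" "Q \<in> Tset Term Wo Bo x"
  shows "P \<in> Tset Term Wo Bo x"
proof -
  obtain n where "Q \<in> Tseq Term Wo Bo x n" using assms(2) by (auto simp: Tset_def)
  then have "P \<in> Tseq Term Wo Bo x (Suc n)" using assms(1) by auto
  then show ?thesis unfolding Tset_def by (rule UN_I[OF UNIV_I])
qed

lemma Tset_if_Black_options_in_Tset: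
  fixes Bo :: "'p::finite \<Rightarrow> 'p set"
  assumes "Bo P \<subseteq> Tset Term Wo Bo x"
  shows "P \<in> Tset Term Wo Bo x"
proof -
  have "subset.chain UNIV (range (Tseq Term Wo Bo x))"
    unfolding subset_chain_def
  proof (intro conjI ballI)
    fix A B assume "A \<in> range (Tseq Term Wo Bo x)" "B \<in> range (Tseq Term Wo Bo x)"
    then obtain m n where "A = Tseq Term Wo Bo x m" "B = Tseq Term Wo Bo x n" by blast
    then show "A \<subseteq> B \<or> B \<subseteq> A"
      using nat_le_linear[of m n] Tseq_mono[of m n Term Wo Bo x] Tseq_mono[of n m Term Wo Bo x]
      by blast
  qed simp
  then obtain B where "B \<in> range (Tseq Term Wo Bo x)" "Bo P \<subseteq> B"
    using finite_subset_Union_chain[OF finite[of "Bo P"] assms[unfolded Tset_def]] by blast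
  then obtain n where "Bo P \<subseteq> Tseq Term Wo Bo x n" by blast
  then have "P \<in> Tseq Term Wo Bo x (Suc n)" by simp
  then show ?thesis unfolding Tset_def by (rule UN_I[OF UNIV_I])
qed

lemma greedy_white_exists:
  fixes Wo :: "'p::finite \<Rightarrow> 'p set"
  assumes "Wo P \<noteq> {}"
  obtains Q where "greedy_white Wo x P Q"
proof -
  have "Max (x ` Wo P) \<in> x ` Wo P" by (rule Max_in) (use assms in auto)
  then show ?thesis using that by (auto simp: greedy_white_def)
qed

lemma richman_defect_le_average:
  fixes Term WWin :: "'p::finite set"
  assumes x: "richman Term WWin Wo Bo x" and z: "richman Term WWin Wo Bo z"
    and P: "P \<notin> Term" and w: "greedy_white Wo x P w"
    and b: "b \<in> Bo P" "z b = Min (z ` Bo P)"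
  shows "2 * (x P - z P) \<le> (x w - z w) + (x b - z b)"
proof -
  have "x P = (x w + Min (x ` Bo P)) / 2"
    using x P w by (simp add: richman_def greedy_white_def)
  moreover have "Min (x ` Bo P) \<le> x b" using b by (auto intro: Min_le)
  moreover have "z P = (Max (z ` Wo P) + z b) / 2"
    using z P b by (simp add: richman_def)
  moreover have "z w \<le> Max (z ` Wo P)" using w by (auto simp: greedy_white_def intro: Max_ge)
  ultimately show ?thesis by argo
qed

lemma Tseq_defect_less_max:
  fixes Term WWin :: "'p::finite set"
  assumes G: "game Term WWin Wo Bo"
    and x: "richman Term WWin Wo Bo x" and z: "richman Term WWin Wo Bo z"
    and d_le: "\<And>Q. x Q - z Q \<le> M" and "0 < M"
  shows "Q \<in> Tseq Term Wo Bo x n \<Longrightarrow> x Q - z Q < M"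
proof (induction n arbitrary: Q)
  case 0
  then show ?case using x z \<open>0 < M\<close> by (simp add: richman_def)
next
  case (Suc n)
  show ?case
  proof (rule ccontr)
    assume "\<not> x Q - z Q < M"
    then have dQ: "x Q - z Q = M" using d_le[of Q] by simp
    then have "Q \<notin> Tseq Term Wo Bo x n" using Suc.IH by force
    then have Q: "Q \<notin> Term" using Tseq_mono[of 0 n Term Wo Bo x] by auto
    note ne = game_options_nonempty[OF G Q]
    have max_spreads: "x w - z w = M \<and> x b - z b = M"
      if "greedy_white Wo x Q w" "b \<in> Bo Q" "z b = Min (z ` Bo Q)" for w b
      using richman_defect_le_average[OF x z Q that] dQ d_le[of w] d_le[of b] by simp
    have "Min (z ` Bo Q) \<in> z ` Bo Q" by (rule Min_in) (use ne in auto)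
    then obtain b where b: "b \<in> Bo Q" "z b = Min (z ` Bo Q)" by auto
    obtain w where w: "greedy_white Wo x Q w" using greedy_white_exists ne by blast
    from Suc.prems \<open>Q \<notin> Tseq Term Wo Bo x n\<close>
    consider w' where "greedy_white Wo x Q w'" "w' \<in> Tseq Term Wo Bo x n"
      | "Bo Q \<subseteq> Tseq Term Wo Bo x n"
      by auto
    then show False
    proof cases
      case 1
      then show False using Suc.IH max_spreads[OF 1(1) b] by fastforce
    next
      case 2
      then show False using Suc.IH max_spreads[OF w b] b(1) by fastforce
    qed
  qed
qed

lemma richman_eq_if_positive_in_Tset:
  fixes Term WWin :: "'p::finite set"
  assumes G: "game Term WWin Wo Bo"
    and x: "richman Term WWin Wo Bo x" and z: "richman Term WWin Wo Bo z"
    and le: "\<And>P. z P \<le> x P"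
    and T: "\<And>P. 0 < x P \<Longrightarrow> P \<in> Tset Term Wo Bo x"
  shows "z P = x P"
proof (rule ccontr)
  assume "z P \<noteq> x P"
  define M where "M = Max (range (\<lambda>Q. x Q - z Q))"
  have d_le: "x Q - z Q \<le> M" for Q unfolding M_def by (rule Max_ge) auto
  have "0 < M" using d_le[of P] le[of P] \<open>z P \<noteq> x P\<close> by simp
  have "M \<in> range (\<lambda>Q. x Q - z Q)" unfolding M_def by (rule Max_in) auto
  then obtain P1 where P1: "x P1 - z P1 = M" by auto
  have "0 < x P1" using P1 \<open>0 < M\<close> z by (auto simp: richman_def intro: less_le_trans)
  then obtain n where "P1 \<in> Tseq Term Wo Bo x n" using T by (auto simp: Tset_def)
  then show False
    using Tseq_defect_less_max[OF G x z d_le \<open>0 < M\<close>] P1 by fastforce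
qed

lemma richman_super_lower_on_greedy_closed:
  fixes Term WWin :: "'p::finite set"
  assumes G: "game Term WWin Wo Bo" and x: "richman Term WWin Wo Bo x"
    and S_Term: "S \<inter> Term = {}"
    and S_White: "\<And>P Q. P \<in> S \<Longrightarrow> greedy_white Wo x P Q \<Longrightarrow> Q \<in> S"
    and S_Black: "\<And>P. P \<in> S \<Longrightarrow> \<exists>b\<in>Bo P. b \<in> S \<and> x b = Min (x ` Bo P)"
    and "0 \<le> \<epsilon>" and \<epsilon>_le: "\<And>P. P \<in> S \<Longrightarrow> \<epsilon> \<le> x P"
    and gap: "\<And>Q R. x R < x Q \<Longrightarrow> x R \<le> x Q - \<epsilon>"
  shows "richman_super Term WWin Wo Bo (\<lambda>P. if P \<in> S then x P - \<epsilon> else x P)"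
    (is "richman_super _ _ _ _ ?y")
  unfolding richman_super_def
proof (intro conjI ballI allI impI)
  have y_le: "?y P \<le> x P" for P using \<open>0 \<le> \<epsilon>\<close> by simp
  fix P
  show "(if P \<in> WWin then 1 else 0) \<le> ?y P" if "P \<in> Term"
    using that S_Term x by (auto simp: richman_def)
  show "0 \<le> ?y P" if "P \<notin> Term" using \<epsilon>_le[of P] x by (auto simp: richman_def)
  assume P: "P \<notin> Term"
  note ne = game_options_nonempty[OF G P]
  have xP: "x P = (Max (x ` Wo P) + Min (x ` Bo P)) / 2" using x P by (simp add: richman_def)
  show "(Max (?y ` Wo P) + Min (?y ` Bo P)) / 2 \<le> ?y P"
  proof (cases "P \<in> S")
    case False
    have "Max (?y ` Wo P) \<le> Max (x ` Wo P)" by (rule Max_image_mono) (use ne y_le in auto)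
    moreover have "Min (?y ` Bo P) \<le> Min (x ` Bo P)" by (rule Min_image_mono) (use ne y_le in auto)
    ultimately show ?thesis using xP False by simp
  next
    case True
    obtain w where w: "greedy_white Wo x P w" using greedy_white_exists ne by blast
    have y_Wo: "?y Q \<le> Max (x ` Wo P) - \<epsilon>" if Q: "Q \<in> Wo P" for Q
    proof (cases "greedy_white Wo x P Q")
      case True
      then show ?thesis using S_White[OF \<open>P \<in> S\<close>] by (simp add: greedy_white_def)
    next
      case False
      then have "x Q < x w"
        using Q w by (auto simp: greedy_white_def order.strict_iff_order intro: Max_ge)
      then show ?thesis using gap[of Q w] y_le[of Q] w by (simp add: greedy_white_def)
    qed
    have "Max (?y ` Wo P) \<le> Max (x ` Wo P) - \<epsilon>"
    proof (rule Max.boundedI)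
      fix a assume "a \<in> ?y ` Wo P"
      then obtain Q where Q: "Q \<in> Wo P" and a: "a = ?y Q" by blast
      show "a \<le> Max (x ` Wo P) - \<epsilon>" unfolding a by (rule y_Wo[OF Q])
    qed (simp, use ne in blast)
    moreover obtain b where b: "b \<in> Bo P" "b \<in> S" "x b = Min (x ` Bo P)"
      using S_Black[OF True] by blast
    then have "Min (?y ` Bo P) \<le> Min (x ` Bo P) - \<epsilon>"
      by (auto intro: Min_le[THEN order_trans])
    ultimately show ?thesis using True xP by simp
  qed
qed

lemma alpha_less_richman_on_greedy_closed:
  fixes Term WWin :: "'p::finite set"
  assumes G: "game Term WWin Wo Bo" and x: "richman Term WWin Wo Bo x"
    and S_Term: "S \<inter> Term = {}" and S_pos: "\<And>P. P \<in> S \<Longrightarrow> 0 < x P"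
    and S_White: "\<And>P Q. P \<in> S \<Longrightarrow> greedy_white Wo x P Q \<Longrightarrow> Q \<in> S"
    and S_Black: "\<And>P. P \<in> S \<Longrightarrow> \<exists>b\<in>Bo P. b \<in> S \<and> x b = Min (x ` Bo P)"
    and P0: "P0 \<in> S"
  shows "alpha Term WWin Wo Bo P0 < x P0"
proof -
  define D where "D = x ` S \<union> {x Q - x R |Q R. x R < x Q}"
  define \<epsilon> where "\<epsilon> = Min D"
  have "finite D"
  proof -
    have "{x Q - x R |Q R. x R < x Q} \<subseteq> (\<lambda>(Q, R). x Q - x R) ` UNIV" by auto
    then have "finite {x Q - x R |Q R. x R < x Q}" by (rule finite_subset) simp
    then show ?thesis by (simp add: D_def)
  qed
  have "D \<noteq> {}" using P0 by (auto simp: D_def)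
  have "0 < \<epsilon>"
    unfolding \<epsilon>_def Min_gr_iff[OF \<open>finite D\<close> \<open>D \<noteq> {}\<close>] using S_pos by (auto simp: D_def)
  have \<epsilon>_le: "\<epsilon> \<le> x P" if "P \<in> S" for P
    unfolding \<epsilon>_def using \<open>finite D\<close> that by (auto simp: D_def intro: Min_le)
  have gap: "x R \<le> x Q - \<epsilon>" if "x R < x Q" for Q R
  proof -
    have "\<epsilon> \<le> x Q - x R" unfolding \<epsilon>_def using \<open>finite D\<close> that by (auto simp: D_def intro!: Min_le)
    then show ?thesis by simp
  qed
  have "richman_super Term WWin Wo Bo (\<lambda>P. if P \<in> S then x P - \<epsilon> else x P)"
    by (rule richman_super_lower_on_greedy_closed[OF G x S_Term])
      (use S_White S_Black \<open>0 < \<epsilon>\<close> \<epsilon>_le gap in auto)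
  then have "alpha Term WWin Wo Bo P0 \<le> (if P0 \<in> S then x P0 - \<epsilon> else x P0)"
    by (rule alpha_le_richman_super[OF G])
  then show ?thesis using P0 \<open>0 < \<epsilon>\<close> by simp
qed

lemma max_outside_Tset_propagates:
  fixes Term WWin :: "'p::finite set"
  assumes G: "game Term WWin Wo Bo" and x: "richman Term WWin Wo Bo x"
    and P: "P \<notin> Tset Term Wo Bo x"
    and max: "\<And>Q. Q \<notin> Tset Term Wo Bo x \<Longrightarrow> x Q \<le> x P"
  shows "greedy_white Wo x P w \<Longrightarrow> w \<notin> Tset Term Wo Bo x \<and> x w = x P"
    and "\<exists>b\<in>Bo P. b \<notin> Tset Term Wo Bo x \<and> x b = x P \<and> x b = Min (x ` Bo P)"
proof -
  have "P \<notin> Term" using P Term_subset_Tset[of Term Wo Bo x] by blast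
  note ne = game_options_nonempty[OF G this]
  have greedy_outside: "w \<notin> Tset Term Wo Bo x" if "greedy_white Wo x P w" for w
    using P Tset_if_greedy_white_in_Tset[OF that] by blast
  obtain w where w: "greedy_white Wo x P w" using greedy_white_exists ne by blast
  have "\<not> Bo P \<subseteq> Tset Term Wo Bo x"
  proof
    assume "Bo P \<subseteq> Tset Term Wo Bo x"
    then have "P \<in> Tset Term Wo Bo x" by (rule Tset_if_Black_options_in_Tset)
    with P show False ..
  qed
  then obtain b where b: "b \<in> Bo P" "b \<notin> Tset Term Wo Bo x" by blast
  \<comment> \<open>\<open>x P\<close> is the average of two values that are at most \<open>x P\<close>, so both equal \<open>x P\<close>.\<close>
  have "x P = (x w + Min (x ` Bo P)) / 2"
    using x \<open>P \<notin> Term\<close> w by (simp add: richman_def greedy_white_def)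
  moreover have "Min (x ` Bo P) \<le> x b" using b by (simp add: Min_le)
  ultimately have "x w = x P" "x b = x P" "Min (x ` Bo P) = x P"
    using max[OF greedy_outside[OF w]] max[OF b(2)] by simp_all
  then show "\<exists>b\<in>Bo P. b \<notin> Tset Term Wo Bo x \<and> x b = x P \<and> x b = Min (x ` Bo P)"
    using b by auto
  show "greedy_white Wo x P w' \<Longrightarrow> w' \<notin> Tset Term Wo Bo x \<and> x w' = x P" for w'
    using greedy_outside w \<open>x w = x P\<close> by (simp add: greedy_white_def)
qed

lemma alpha_less_richman_if_positive_outside_Tset:
  fixes Term WWin :: "'p::finite set"
  assumes G: "game Term WWin Wo Bo" and x: "richman Term WWin Wo Bo x"
    and P0: "0 < x P0" "P0 \<notin> Tset Term Wo Bo x"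
  shows "\<exists>P. alpha Term WWin Wo Bo P < x P"
proof -
  let ?U = "- Tset Term Wo Bo x"
  have "Max (x ` ?U) \<in> x ` ?U" by (rule Max_in) (simp, use P0 in blast)
  then obtain P1 where P1: "P1 \<notin> Tset Term Wo Bo x" "x P1 = Max (x ` ?U)" by auto
  have max: "x Q \<le> x P1" if "Q \<notin> Tset Term Wo Bo x" for Q
    unfolding P1(2) by (rule Max_ge) (simp_all add: that)
  define S where "S = {Q. Q \<notin> Tset Term Wo Bo x \<and> x Q = x P1}"
  have max_S: "x Q \<le> x P" if "Q \<notin> Tset Term Wo Bo x" "P \<in> S" for P Q
    using max that by (simp add: S_def)
  have "alpha Term WWin Wo Bo P1 < x P1"
  proof (rule alpha_less_richman_on_greedy_closed[OF G x])
    show "S \<inter> Term = {}" using Term_subset_Tset[of Term Wo Bo x] unfolding S_def by blast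
    show "0 < x P" if "P \<in> S" for P using that max[OF P0(2)] P0(1) by (simp add: S_def)
    show "w \<in> S" if P: "P \<in> S" and w: "greedy_white Wo x P w" for P w
    proof -
      have "P \<notin> Tset Term Wo Bo x" using P by (simp add: S_def)
      then have "w \<notin> Tset Term Wo Bo x \<and> x w = x P"
        using max_outside_Tset_propagates(1)[OF G x _ max_S[OF _ P] w] by blast
      then show ?thesis using P by (simp add: S_def)
    qed
    show "\<exists>b\<in>Bo P. b \<in> S \<and> x b = Min (x ` Bo P)" if P: "P \<in> S" for P
    proof -
      have "P \<notin> Tset Term Wo Bo x" using P by (simp add: S_def)
      then obtain b where "b \<in> Bo P" "b \<notin> Tset Term Wo Bo x" "x b = x P" "x b = Min (x ` Bo P)"
        using max_outside_Tset_propagates(2)[OF G x _ max_S[OF _ P]] by blast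
      then show ?thesis using P by (auto simp: S_def)
    qed
    show "P1 \<in> S" using P1 by (simp add: S_def)
  qed
  then show ?thesis by blast
qed

theorem proposition2:
  fixes Term WWin :: "'p::finite set" and Wo Bo :: "'p \<Rightarrow> 'p set" and x :: "'p \<Rightarrow> real"
  assumes "game Term WWin Wo Bo"
    and "richman Term WWin Wo Bo x"
  shows "(\<forall>P. alpha Term WWin Wo Bo P = x P) \<longleftrightarrow> (\<forall>P. x P > 0 \<longrightarrow> P \<in> Tset Term Wo Bo x)"
proof
  assume "\<forall>P. alpha Term WWin Wo Bo P = x P"
  then show "\<forall>P. x P > 0 \<longrightarrow> P \<in> Tset Term Wo Bo x"
    using alpha_less_richman_if_positive_outside_Tset[OF assms] by force
next
  assume T: "\<forall>P. x P > 0 \<longrightarrow> P \<in> Tset Term Wo Bo x"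
  show "\<forall>P. alpha Term WWin Wo Bo P = x P"
  proof
    fix P
    show "alpha Term WWin Wo Bo P = x P"
      by (rule richman_eq_if_positive_in_Tset[OF assms richman_alpha[OF assms(1)]
            alpha_le_richman[OF assms]])
        (use T in blast)
  qed
qed

end
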